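(* Let $G$ be a perfectly labeled graph on $[n]$ which is crossing closed. Then $G$ is upper crossing closed with respect to the colexicographic order on $E(G)$, and also with respect to the lexicographic order on $E(G)$.
   Context: Graphs are finite simple graphs with vertex set $[n]$; edges are written $ij$ with $i<j$. Two edges $a_1a_2$ and $b_1b_2$ cross if $a_1<b_1<a_2<b_2$ or $b_1<a_1<b_2<a_2$. $G$ is perfectly labeled if whenever $ik,jk\in E(G)$ with $i<j<k$, also $ij\in E(G)$. Lexicographic order: $ab\lhd a'b'$ iff $a<a'$, or $a=a'$ and $b<b'$; colexicographic order: $ab\lhd a'b'$ iff $b<b'$, or $b=b'$ and $a<a'$. Two crossing edges $e,f$ are crossing closed if among all induced connected subgraphs of $G$ containing $e$ and $f$ there is a unique minimal one under containment, denoted $J(e,f)$; $G$ is crossing closed if all pairs of crossing edges are. $G$ is upper crossing closed with respect to a total order $\unlhd$ on $E(G)$ if it is crossing closed and for every pair of crossing edges $e,f$, $J(e,f)$ contains an edge $h$ with $h\lhd e$ and $h\lhd f$. *)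

theory Defs
  imports Main
begin

text \<open>A graph on [n] is given by its edge set; an edge ij with i<j is the pair (i,j).\<close>

definition graph_on :: "nat \<Rightarrow> (nat \<times> nat) set \<Rightarrow> bool" where
  "graph_on n E \<longleftrightarrow> E \<subseteq> {(i,j). 1 \<le> i \<and> i < j \<and> j \<le> n}"

definition crossing :: "nat \<times> nat \<Rightarrow> nat \<times> nat \<Rightarrow> bool" where
  "crossing e f \<longleftrightarrow>
     (fst e < fst f \<and> fst f < snd e \<and> snd e < snd f) \<or>
     (fst f < fst e \<and> fst e < snd f \<and> snd f < snd e)"

definition perfectly_labeled :: "(nat \<times> nat) set \<Rightarrow> bool" where
  "perfectly_labeled E \<longleftrightarrow>
     (\<forall>i j k. (i,k) \<in> E \<and> (j,k) \<in> E \<and> i < j \<and> j < k \<longrightarrow> (i,j) \<in> E)"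

definition induced_edges :: "(nat \<times> nat) set \<Rightarrow> nat set \<Rightarrow> (nat \<times> nat) set" where
  "induced_edges E S = {(a,b) \<in> E. a \<in> S \<and> b \<in> S}"

definition connected_induced :: "(nat \<times> nat) set \<Rightarrow> nat set \<Rightarrow> bool" where
  "connected_induced E S \<longleftrightarrow> S \<noteq> {} \<and>
     (\<forall>u\<in>S. \<forall>v\<in>S. (u,v) \<in> (induced_edges E S \<union> (induced_edges E S)\<inverse>)\<^sup>*)"

text \<open>Vertex sets S of induced connected subgraphs of G containing edges e and f.
  Induced subgraphs are ordered by containment exactly as their vertex sets are.\<close>
definition admissible :: "nat \<Rightarrow> (nat \<times> nat) set \<Rightarrow> nat \<times> nat \<Rightarrow> nat \<times> nat \<Rightarrow> nat set \<Rightarrow> bool" where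
  "admissible n E e f S \<longleftrightarrow> S \<subseteq> {1..n} \<and>
     fst e \<in> S \<and> snd e \<in> S \<and> fst f \<in> S \<and> snd f \<in> S \<and> connected_induced E S"

definition minimal_admissible :: "nat \<Rightarrow> (nat \<times> nat) set \<Rightarrow> nat \<times> nat \<Rightarrow> nat \<times> nat \<Rightarrow> nat set \<Rightarrow> bool" where
  "minimal_admissible n E e f S \<longleftrightarrow> admissible n E e f S \<and>
     (\<forall>T. admissible n E e f T \<and> T \<subseteq> S \<longrightarrow> T = S)"

definition crossing_closed_pair :: "nat \<Rightarrow> (nat \<times> nat) set \<Rightarrow> nat \<times> nat \<Rightarrow> nat \<times> nat \<Rightarrow> bool" where
  "crossing_closed_pair n E e f \<longleftrightarrow> (\<exists>!S. minimal_admissible n E e f S)"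

definition J_vertices :: "nat \<Rightarrow> (nat \<times> nat) set \<Rightarrow> nat \<times> nat \<Rightarrow> nat \<times> nat \<Rightarrow> nat set" where
  "J_vertices n E e f = (THE S. minimal_admissible n E e f S)"

definition crossing_closed :: "nat \<Rightarrow> (nat \<times> nat) set \<Rightarrow> bool" where
  "crossing_closed n E \<longleftrightarrow>
     (\<forall>e\<in>E. \<forall>f\<in>E. crossing e f \<longrightarrow> crossing_closed_pair n E e f)"

definition upper_crossing_closed ::
  "nat \<Rightarrow> (nat \<times> nat) set \<Rightarrow> (nat \<times> nat \<Rightarrow> nat \<times> nat \<Rightarrow> bool) \<Rightarrow> bool" where
  "upper_crossing_closed n E prec \<longleftrightarrow> crossing_closed n E \<and>
     (\<forall>e\<in>E. \<forall>f\<in>E. crossing e f \<longrightarrow>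
        (\<exists>h \<in> induced_edges E (J_vertices n E e f). prec h e \<and> prec h f))"

definition lex_less :: "nat \<times> nat \<Rightarrow> nat \<times> nat \<Rightarrow> bool" where
  "lex_less e e' \<longleftrightarrow> fst e < fst e' \<or> (fst e = fst e' \<and> snd e < snd e')"

definition colex_less :: "nat \<times> nat \<Rightarrow> nat \<times> nat \<Rightarrow> bool" where
  "colex_less e e' \<longleftrightarrow> snd e < snd e' \<or> (snd e = snd e' \<and> fst e < fst e')"

end

theory Submission
  imports Defs
begin

text \<open>In a perfectly labeled graph the lower neighbours of any vertex form a clique, so deleting
  the largest vertex of a connected induced subgraph leaves it connected. Iterating, the part of a
  connected induced subgraph S below any vertex w of S is again connected. If e and f cross, their
  smaller endpoints u < w lie in J(e,f), and an edge of J(e,f) leaving u inside the part below w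
  has both endpoints at most w, which is smaller than both larger endpoints of e and f, and its
  smaller endpoint is at most u; it therefore precedes e and f colexicographically and
  lexicographically.\<close>

lemma rtrancl_sym_exits_set:
  assumes "(u, v) \<in> (R \<union> R\<inverse>)\<^sup>*" "u \<in> A" "v \<notin> A"
  shows "\<exists>x\<in>A. \<exists>y. y \<notin> A \<and> ((x, y) \<in> R \<or> (y, x) \<in> R)"
  using assms by (induction rule: rtrancl_induct) auto

lemma connected_induced_cut:
  assumes "connected_induced E S" "A \<subseteq> S" "A \<noteq> {}" "S - A \<noteq> {}"
  shows "\<exists>x\<in>A. \<exists>y\<in>S - A. (x, y) \<in> E \<or> (y, x) \<in> E"
proof -
  obtain u v where "u \<in> A" "v \<in> S - A"
    using assms(3,4) by blast
  with assms(1,2) have "(u, v) \<in> (induced_edges E S \<union> (induced_edges E S)\<inverse>)\<^sup>*"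
    unfolding connected_induced_def by blast
  from rtrancl_sym_exits_set[OF this \<open>u \<in> A\<close>] \<open>v \<in> S - A\<close> show ?thesis
    by (fastforce simp: induced_edges_def)
qed

lemma connected_inducedI:
  assumes "S \<noteq> {}"
    and "\<And>A. A \<subseteq> S \<Longrightarrow> A \<noteq> {} \<Longrightarrow> S - A \<noteq> {} \<Longrightarrow>
      \<exists>x\<in>A. \<exists>y\<in>S - A. (x, y) \<in> E \<or> (y, x) \<in> E"
  shows "connected_induced E S"
  unfolding connected_induced_def
proof (intro conjI ballI)
  show "S \<noteq> {}" by fact
  fix u v assume "u \<in> S" "v \<in> S"
  let ?R = "(induced_edges E S \<union> (induced_edges E S)\<inverse>)\<^sup>*"
  define A where "A = {z \<in> S. (u, z) \<in> ?R}"
  show "(u, v) \<in> ?R"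
  proof (rule ccontr)
    assume "(u, v) \<notin> ?R"
    with \<open>u \<in> S\<close> \<open>v \<in> S\<close> have "A \<subseteq> S" "A \<noteq> {}" "S - A \<noteq> {}"
      by (auto simp: A_def)
    then obtain x y where "x \<in> A" "y \<in> S - A" "(x, y) \<in> E \<or> (y, x) \<in> E"
      using assms(2) by blast
    then have "(u, y) \<in> ?R"
      unfolding A_def induced_edges_def by (auto intro: rtrancl_into_rtrancl)
    with \<open>y \<in> S - A\<close> show False
      by (simp add: A_def)
  qed
qed

lemma perfectly_labeled_lower_neighbours_adjacent:
  assumes "graph_on n E" "perfectly_labeled E" "(x, m) \<in> E" "(y, m) \<in> E" "x \<noteq> y"
  shows "(x, y) \<in> E \<or> (y, x) \<in> E"
proof -
  have "x < m" "y < m"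
    using assms(1,3,4) by (auto simp: graph_on_def)
  with assms(2-5) show ?thesis
    unfolding perfectly_labeled_def by (metis linorder_neqE_nat)
qed

lemma connected_induced_Diff_Max:
  assumes "graph_on n E" "perfectly_labeled E" "finite S" "connected_induced E S"
    and "S - {Max S} \<noteq> {}"
  shows "connected_induced E (S - {Max S})"
proof (rule connected_inducedI[OF assms(5)])
  let ?m = "Max S"
  fix A assume A: "A \<subseteq> S - {?m}" "A \<noteq> {}" "S - {?m} - A \<noteq> {}"
  have "?m \<in> S"
    using assms(3,5) by (intro Max_in) auto
  have edge_to_max: "(x, ?m) \<in> E" if "x \<in> S" "(x, ?m) \<in> E \<or> (?m, x) \<in> E" for x
    using that assms(1) Max_ge[OF assms(3) that(1)] by (auto simp: graph_on_def)
  obtain x y where x: "x \<in> A" "y \<in> S - A" "(x, y) \<in> E \<or> (y, x) \<in> E"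
    using connected_induced_cut[OF assms(4), of A] A by blast
  have "S - (S - {?m} - A) = A \<union> {?m}"
    using A(1) \<open>?m \<in> S\<close> by blast
  then obtain x' y' where x': "x' \<in> S - {?m} - A" "y' \<in> A \<union> {?m}" "(x', y') \<in> E \<or> (y', x') \<in> E"
    using connected_induced_cut[OF assms(4), of "S - {?m} - A"] A by auto
  show "\<exists>x\<in>A. \<exists>y\<in>S - {?m} - A. (x, y) \<in> E \<or> (y, x) \<in> E"
  proof (cases "y = ?m \<and> y' = ?m")
    case True
    then have "(x, ?m) \<in> E" "(x', ?m) \<in> E" "x \<noteq> x'"
      using x x' A(1) edge_to_max by auto
    then have "(x, x') \<in> E \<or> (x', x) \<in> E"
      using perfectly_labeled_lower_neighbours_adjacent[OF assms(1,2)] by blast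
    with x(1) x'(1) show ?thesis by blast
  next
    case False
    with x x' show ?thesis by blast
  qed
qed

lemma connected_induced_Int_atMost:
  assumes "graph_on n E" "perfectly_labeled E"
    and "finite S" "connected_induced E S" "S \<inter> {..t} \<noteq> {}"
  shows "connected_induced E (S \<inter> {..t})"
  using assms(3-5)
proof (induction "card S" arbitrary: S rule: less_induct)
  case less
  show ?case
  proof (cases "S \<subseteq> {..t}")
    case True
    with less.prems show ?thesis by (simp add: Int_absorb2)
  next
    case False
    with less.prems(1) have "t < Max S"
      by (meson Max_ge atMost_iff not_le order.strict_trans2 subsetI)
    then have below: "(S - {Max S}) \<inter> {..t} = S \<inter> {..t}"
      by auto
    with less.prems(3) have "S - {Max S} \<noteq> {}"
      by auto
    with assms(1,2) less.prems(1,2) have "connected_induced E (S - {Max S})"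
      by (rule connected_induced_Diff_Max)
    moreover have "card (S - {Max S}) < card S"
      using less.prems(1,3) by (intro card_Diff1_less Max_in) auto
    ultimately show ?thesis
      using less.hyps[of "S - {Max S}"] below less.prems by auto
  qed
qed

lemma connected_induced_edge_below:
  assumes "graph_on n E" "perfectly_labeled E" "finite S" "connected_induced E S"
    and "u \<in> S" "w \<in> S" "u < w"
  shows "\<exists>h \<in> induced_edges E S. fst h \<le> u \<and> snd h \<le> w"
proof -
  let ?D = "S \<inter> {..w}"
  have "u \<in> ?D"
    using assms(5,7) by simp
  then have "connected_induced E ?D"
    using connected_induced_Int_atMost[OF assms(1-4)] by blast
  then obtain y where y: "y \<in> ?D" "(u, y) \<in> E \<or> (y, u) \<in> E"
    using connected_induced_cut[of E ?D "{u}"] assms(5-7) by auto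
  show ?thesis
  proof (cases "(u, y) \<in> E")
    case True
    with y assms(5) show ?thesis
      by (intro bexI[of _ "(u, y)"]) (auto simp: induced_edges_def)
  next
    case False
    with y have "(y, u) \<in> E" by simp
    moreover from this assms(1) have "y < u"
      by (auto simp: graph_on_def)
    ultimately show ?thesis using y assms(5,7)
      by (intro bexI[of _ "(y, u)"]) (auto simp: induced_edges_def)
  qed
qed

lemma crossing_edges_lower_edge:
  assumes "graph_on n E" "perfectly_labeled E" "finite S" "connected_induced E S"
    and "fst e \<in> S" "fst f \<in> S" "crossing e f"
  shows "\<exists>h \<in> induced_edges E S.
    colex_less h e \<and> colex_less h f \<and> lex_less h e \<and> lex_less h f"
proof -
  let ?u = "min (fst e) (fst f)" and ?w = "max (fst e) (fst f)"
  have "?u < ?w" "?w < snd e" "?w < snd f"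
    using assms(7) by (auto simp: crossing_def)
  moreover obtain h where "h \<in> induced_edges E S" "fst h \<le> ?u" "snd h \<le> ?w"
    using connected_induced_edge_below[OF assms(1-4), of ?u ?w] assms(5,6) \<open>?u < ?w\<close>
    by (auto simp: min_def max_def split: if_splits)
  ultimately show ?thesis
    by (intro bexI[of _ h]) (auto simp: colex_less_def lex_less_def)
qed

lemma admissible_J_vertices:
  assumes "crossing_closed_pair n E e f"
  shows "admissible n E e f (J_vertices n E e f)"
  using theI'[OF assms[unfolded crossing_closed_pair_def]]
  by (simp add: J_vertices_def minimal_admissible_def)

theorem proposition5p12:
  fixes n :: nat and E :: "(nat \<times> nat) set"
  assumes "graph_on n E"
    and "perfectly_labeled E"
    and "crossing_closed n E"
  shows "upper_crossing_closed n E colex_less \<and> upper_crossing_closed n E lex_less"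
proof -
  have "\<exists>h \<in> induced_edges E (J_vertices n E e f).
      colex_less h e \<and> colex_less h f \<and> lex_less h e \<and> lex_less h f"
    if "e \<in> E" "f \<in> E" "crossing e f" for e f
  proof -
    let ?J = "J_vertices n E e f"
    have adm: "admissible n E e f ?J"
      using assms(3) that by (simp add: crossing_closed_def admissible_J_vertices)
    then have "finite ?J"
      by (auto simp: admissible_def intro: finite_subset)
    with adm show ?thesis
      using crossing_edges_lower_edge[OF assms(1,2)] that(3) by (simp add: admissible_def)
  qed
  with assms(3) show ?thesis
    unfolding upper_crossing_closed_def by blast
qed

end
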